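(* For every regular language $L\subseteq\Sigma^*$, the map \[\mathrm{dr}_L\colon [\mathrm{LQ}(L^r)]^{\mathsf{op}}\to\mathrm{LQ}(L),\qquad K\mapsto \big(\overline{K^r}\big)^{-1}L,\] is a well-defined isomorphism of $\mathbf{JSL}$-dfas; i.e., the minimal $\mathbf{JSL}$-dfas of $L$ and $L^r$ are dual to each other.
   Context: For $u\in\Sigma^*$, $u^{-1}L=\{w:uw\in L\}$; for $U\subseteq\Sigma^*$, $U^{-1}L=\bigcup_{u\in U}u^{-1}L$. $\overline{K}=\Sigma^*\setminus K$, $K^r=\{w^r:w\in K\}$ where $w^r$ is the reversal of $w$. $\mathrm{LQ}(L)$ is the $\mathbf{JSL}$-dfa whose states are all finite unions (including $\emptyset$) of left derivatives $u^{-1}L$, ordered by inclusion, with transitions $K\mapsto a^{-1}K$, initial state $L$, and final states those $K$ with $\epsilon\in K$. A $\mathbf{JSL}$-dfa is a finite semilattice $S$ with join-preserving transitions $\delta_a$, an initial state $s_0$, and final states $F=\{s:s\not\le s_f\}$ for some $s_f$; morphisms are join-preserving maps preserving transitions, initial state and final states (both ways). The dual $A^{\mathsf{op}}$ has states $S$ with reversed order, transitions $\delta_a^*(s)=$ largest $t$ with $\delta_a(t)\le s$, initial state the largest non-final state of $A$, final states $\{s: s_0\not\le s\}$. *)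

theory Defs
  imports Main
begin

definition lquot :: "'a list \<Rightarrow> 'a list set \<Rightarrow> 'a list set" where
  "lquot u L = {w. u @ w \<in> L}"

definition regular :: "'a list set \<Rightarrow> bool" where
  "regular L \<longleftrightarrow> (\<exists>(Q :: nat set) q0 (\<delta> :: 'a \<Rightarrow> nat \<Rightarrow> nat) F.
      finite Q \<and> q0 \<in> Q \<and> (\<forall>a q. q \<in> Q \<longrightarrow> \<delta> a q \<in> Q) \<and> F \<subseteq> Q \<and>
      L = {w. foldl (\<lambda>q a. \<delta> a q) q0 w \<in> F})"

record ('s, 'a) jdfa =
  states :: "'s set"
  le :: "'s \<Rightarrow> 's \<Rightarrow> bool"
  trans :: "'a \<Rightarrow> 's \<Rightarrow> 's"
  init :: 's
  fin :: "'s set"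

definition is_lub :: "('s \<Rightarrow> 's \<Rightarrow> bool) \<Rightarrow> 's set \<Rightarrow> 's set \<Rightarrow> 's \<Rightarrow> bool" where
  "is_lub r S X x \<longleftrightarrow> x \<in> S \<and> (\<forall>y\<in>X. r y x) \<and> (\<forall>z\<in>S. (\<forall>y\<in>X. r y z) \<longrightarrow> r x z)"

definition join :: "('s \<Rightarrow> 's \<Rightarrow> bool) \<Rightarrow> 's set \<Rightarrow> 's set \<Rightarrow> 's" where
  "join r S X = (THE x. is_lub r S X x)"

text \<open>A finite join-semilattice (with bottom = join of the empty set).\<close>
definition finite_jsl :: "'s set \<Rightarrow> ('s \<Rightarrow> 's \<Rightarrow> bool) \<Rightarrow> bool" where
  "finite_jsl S r \<longleftrightarrow> finite S \<and>
     (\<forall>x\<in>S. r x x) \<and>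
     (\<forall>x\<in>S. \<forall>y\<in>S. r x y \<and> r y x \<longrightarrow> x = y) \<and>
     (\<forall>x\<in>S. \<forall>y\<in>S. \<forall>z\<in>S. r x y \<and> r y z \<longrightarrow> r x z) \<and>
     (\<forall>X. X \<subseteq> S \<longrightarrow> finite X \<longrightarrow> (\<exists>x. is_lub r S X x))"

definition join_preserving ::
  "'s set \<Rightarrow> ('s \<Rightarrow> 's \<Rightarrow> bool) \<Rightarrow> 't set \<Rightarrow> ('t \<Rightarrow> 't \<Rightarrow> bool) \<Rightarrow> ('s \<Rightarrow> 't) \<Rightarrow> bool" where
  "join_preserving S r T q f \<longleftrightarrow> (\<forall>x\<in>S. f x \<in> T) \<and>
     (\<forall>X. X \<subseteq> S \<longrightarrow> finite X \<longrightarrow> f (join r S X) = join q T (f ` X))"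

definition jsl_dfa :: "('s, 'a) jdfa \<Rightarrow> bool" where
  "jsl_dfa A \<longleftrightarrow> finite_jsl (states A) (le A) \<and>
     (\<forall>a. join_preserving (states A) (le A) (states A) (le A) (trans A a)) \<and>
     init A \<in> states A \<and>
     (\<exists>sf\<in>states A. fin A = {s \<in> states A. \<not> le A s sf})"

definition jsl_dfa_morphism :: "('s, 'a) jdfa \<Rightarrow> ('t, 'a) jdfa \<Rightarrow> ('s \<Rightarrow> 't) \<Rightarrow> bool" where
  "jsl_dfa_morphism A B f \<longleftrightarrow>
     join_preserving (states A) (le A) (states B) (le B) f \<and>
     (\<forall>a. \<forall>s\<in>states A. f (trans A a s) = trans B a (f s)) \<and>
     f (init A) = init B \<and>
     (\<forall>s\<in>states A. f s \<in> fin B \<longleftrightarrow> s \<in> fin A)"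

definition jsl_dfa_iso :: "('s, 'a) jdfa \<Rightarrow> ('t, 'a) jdfa \<Rightarrow> ('s \<Rightarrow> 't) \<Rightarrow> bool" where
  "jsl_dfa_iso A B f \<longleftrightarrow> jsl_dfa_morphism A B f \<and> bij_betw f (states A) (states B) \<and>
     jsl_dfa_morphism B A (the_inv_into (states A) f)"

definition dual :: "('s, 'a) jdfa \<Rightarrow> ('s, 'a) jdfa" where
  "dual A = \<lparr> states = states A,
     le = (\<lambda>x y. le A y x),
     trans = (\<lambda>a s. THE t. t \<in> states A \<and> le A (trans A a t) s \<and>
                         (\<forall>t'\<in>states A. le A (trans A a t') s \<longrightarrow> le A t' t)),
     init = (THE s. s \<in> states A \<and> s \<notin> fin A \<and>
                    (\<forall>t\<in>states A. t \<notin> fin A \<longrightarrow> le A t s)),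
     fin = {s \<in> states A. \<not> le A (init A) s} \<rparr>"

definition LQ :: "'a list set \<Rightarrow> ('a list set, 'a) jdfa" where
  "LQ L = \<lparr> states = {\<Union>D | D. finite D \<and> D \<subseteq> {lquot u L | u. True}},
     le = (\<subseteq>),
     trans = (\<lambda>a K. lquot [a] K),
     init = L,
     fin = {K \<in> {\<Union>D | D. finite D \<and> D \<subseteq> {lquot u L | u. True}}. [] \<in> K} \<rparr>"

definition lquot_set :: "'a list set \<Rightarrow> 'a list set \<Rightarrow> 'a list set" where
  "lquot_set U L = (\<Union>u\<in>U. lquot u L)"

definition dr :: "'a list set \<Rightarrow> 'a list set \<Rightarrow> 'a list set" where
  "dr L K = lquot_set (- (rev ` K)) L"

end

theory Submission
  imports Defs
begin

text \<open>For a union K of left quotients of the reversal of L, the complement U of the reversal of K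
  is closed for the polarity of L: taking V = right_polar L U, the words v with uv outside L for
  all u in U, and then left_polar L V gives back U. Since dr L K is the complement of V, the map
  dr L is an order-reversing bijection onto the unions of left quotients of L. Moreover
  a^-1 t is contained in K iff a^-1 (dr L K) is contained in dr L t, so dr L sends the largest such
  t, i.e. the dual transition, to a^-1 (dr L K); the initial and final states match in the same
  way. An order isomorphism onto a JSL-dfa commuting with the automaton structure is a
  JSL-dfa isomorphism.\<close>

section \<open>Finite join-semilattices and order isomorphisms\<close>

lemma finite_jslD:
  assumes "finite_jsl S r"
  shows "finite S"
    and "x \<in> S \<Longrightarrow> r x x"
    and "\<lbrakk>x \<in> S; y \<in> S; r x y; r y x\<rbrakk> \<Longrightarrow> x = y"
    and "\<lbrakk>x \<in> S; y \<in> S; z \<in> S; r x y; r y z\<rbrakk> \<Longrightarrow> r x z"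
    and "\<lbrakk>X \<subseteq> S; finite X\<rbrakk> \<Longrightarrow> \<exists>x. is_lub r S X x"
  using assms unfolding finite_jsl_def by blast+

lemma join_eqI:
  assumes "finite_jsl S r" "is_lub r S X x"
  shows "join r S X = x"
  unfolding join_def
proof (rule the_equality)
  show "is_lub r S X x" by fact
  fix y assume "is_lub r S X y"
  with assms(2) have "y \<in> S" "x \<in> S" "r y x" "r x y" unfolding is_lub_def by auto
  then show "y = x" using finite_jslD(3)[OF assms(1)] by blast
qed

lemma is_lub_order_iso:
  assumes "bij_betw f S T" "\<forall>x\<in>S. \<forall>y\<in>S. r x y \<longleftrightarrow> q (f x) (f y)" "X \<subseteq> S" "x \<in> S"
  shows "is_lub q T (f ` X) (f x) \<longleftrightarrow> is_lub r S X x"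
  using assms unfolding is_lub_def bij_betw_def by (auto simp: subset_iff)

lemma finite_jsl_order_iso:
  assumes bij: "bij_betw f S T" and ord: "\<forall>x\<in>S. \<forall>y\<in>S. r x y \<longleftrightarrow> q (f x) (f y)"
    and T: "finite_jsl T q"
  shows "finite_jsl S r"
  unfolding finite_jsl_def
proof (intro conjI ballI allI impI)
  show "finite S" using bij_betw_finite[OF bij] finite_jslD(1)[OF T] by blast
next
  fix x assume "x \<in> S"
  then show "r x x" using ord finite_jslD(2)[OF T] bij_betw_apply[OF bij] by blast
next
  fix x y assume "x \<in> S" "y \<in> S" "r x y \<and> r y x"
  then show "x = y"
    using ord finite_jslD(3)[OF T] bij_betw_apply[OF bij] bij_betw_imp_inj_on[OF bij]
    by (meson inj_onD)
next
  fix x y z assume "x \<in> S" "y \<in> S" "z \<in> S" "r x y \<and> r y z"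
  then show "r x z" using ord finite_jslD(4)[OF T] bij_betw_apply[OF bij] by meson
next
  fix X assume X: "X \<subseteq> S" "finite X"
  then have "f ` X \<subseteq> T" using bij by (auto simp: bij_betw_def)
  then obtain z where z: "is_lub q T (f ` X) z" using finite_jslD(5)[OF T] X(2) by blast
  then obtain x where "x \<in> S" "z = f x" using bij unfolding is_lub_def bij_betw_def by blast
  with z show "\<exists>x. is_lub r S X x" using is_lub_order_iso[OF bij ord X(1)] by blast
qed

lemma join_preserving_order_iso:
  assumes bij: "bij_betw f S T" and ord: "\<forall>x\<in>S. \<forall>y\<in>S. r x y \<longleftrightarrow> q (f x) (f y)"
    and T: "finite_jsl T q"
  shows "join_preserving S r T q f"
  unfolding join_preserving_def
proof (intro conjI ballI allI impI)
  show "x \<in> S \<Longrightarrow> f x \<in> T" for x using bij by (rule bij_betw_apply)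
  have S: "finite_jsl S r" using bij ord T by (rule finite_jsl_order_iso)
  fix X assume X: "X \<subseteq> S" "finite X"
  then obtain x where x: "is_lub r S X x" using finite_jslD(5)[OF S] by blast
  then have "x \<in> S" unfolding is_lub_def by blast
  with x have "is_lub q T (f ` X) (f x)" using is_lub_order_iso[OF bij ord X(1)] by blast
  then show "f (join r S X) = join q T (f ` X)" using join_eqI[OF S x] join_eqI[OF T] by simp
qed

lemma order_iso_the_inv_into:
  assumes bij: "bij_betw f S T" and ord: "\<forall>x\<in>S. \<forall>y\<in>S. r x y \<longleftrightarrow> q (f x) (f y)"
  shows "bij_betw (the_inv_into S f) T S"
    and "\<forall>x\<in>T. \<forall>y\<in>T. q x y \<longleftrightarrow> r (the_inv_into S f x) (the_inv_into S f y)"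
proof -
  show bij': "bij_betw (the_inv_into S f) T S" using bij by (rule bij_betw_the_inv_into)
  have "y \<in> T \<Longrightarrow> f (the_inv_into S f y) = y \<and> the_inv_into S f y \<in> S" for y
    using bij bij' by (meson bij_betwE f_the_inv_into_f_bij_betw)
  then show "\<forall>x\<in>T. \<forall>y\<in>T. q x y \<longleftrightarrow> r (the_inv_into S f x) (the_inv_into S f y)"
    using ord by metis
qed

lemma join_preserving_comp:
  assumes "join_preserving S r T q f" "join_preserving T q U p h"
  shows "join_preserving S r U p (h \<circ> f)"
  unfolding join_preserving_def
proof (intro conjI ballI allI impI)
  show "x \<in> S \<Longrightarrow> (h \<circ> f) x \<in> U" for x using assms unfolding join_preserving_def by simp
  fix X assume "X \<subseteq> S" "finite X"
  moreover have "f ` X \<subseteq> T" using assms(1) calculation(1) unfolding join_preserving_def by blast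
  ultimately show "(h \<circ> f) (join r S X) = join p U ((h \<circ> f) ` X)"
    using assms unfolding join_preserving_def by (simp add: image_comp)
qed

lemma join_preserving_cong:
  assumes "join_preserving S r T q f" "finite_jsl S r" "\<And>x. x \<in> S \<Longrightarrow> f x = h x"
  shows "join_preserving S r T q h"
  unfolding join_preserving_def
proof (intro conjI ballI allI impI)
  show "x \<in> S \<Longrightarrow> h x \<in> T" for x using assms unfolding join_preserving_def by auto
  fix X assume X: "X \<subseteq> S" "finite X"
  then obtain x where x: "is_lub r S X x" using finite_jslD(5)[OF assms(2)] by blast
  then have "join r S X \<in> S" using join_eqI[OF assms(2) x] unfolding is_lub_def by simp
  moreover have "h ` X = f ` X" using X assms(3) by (force simp: image_def)
  ultimately show "h (join r S X) = join q T (h ` X)"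
    using assms X unfolding join_preserving_def by metis
qed

lemma
  assumes "finite S" "\<forall>X \<subseteq> S. \<Union>X \<in> S"
  shows finite_jsl_Union_closed: "finite_jsl S (\<subseteq>)"
    and join_Union_closed: "X \<subseteq> S \<Longrightarrow> join (\<subseteq>) S X = \<Union>X"
proof -
  have lub: "X \<subseteq> S \<Longrightarrow> is_lub (\<subseteq>) S X (\<Union>X)" for X
    using assms unfolding is_lub_def by auto
  show jsl: "finite_jsl S (\<subseteq>)" unfolding finite_jsl_def
    using assms(1) lub by (intro conjI ballI allI impI; blast)
  show "X \<subseteq> S \<Longrightarrow> join (\<subseteq>) S X = \<Union>X" using join_eqI[OF jsl lub] .
qed

locale jsl_dfa_order_iso =
  fixes A :: "('s, 'a) jdfa" and B :: "('t, 'a) jdfa" and f :: "'t \<Rightarrow> 's"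
  assumes jsl_dfa_A: "jsl_dfa A"
    and bij: "bij_betw f (states B) (states A)"
    and ord: "\<forall>x\<in>states B. \<forall>y\<in>states B. le B x y \<longleftrightarrow> le A (f x) (f y)"
    and trans_closed: "s \<in> states B \<Longrightarrow> trans B a s \<in> states B"
    and trans_comm: "s \<in> states B \<Longrightarrow> f (trans B a s) = trans A a (f s)"
    and init_in: "init B \<in> states B"
    and init_comm: "f (init B) = init A"
    and fin_subset: "fin B \<subseteq> states B"
    and fin_iff: "s \<in> states B \<Longrightarrow> s \<in> fin B \<longleftrightarrow> f s \<in> fin A"
begin

abbreviation (input) f_inv where "f_inv \<equiv> the_inv_into (states B) f"

lemma f_inv_in: "t \<in> states A \<Longrightarrow> f_inv t \<in> states B"
  and f_f_inv: "t \<in> states A \<Longrightarrow> f (f_inv t) = t"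
  and f_inv_f: "s \<in> states B \<Longrightarrow> f_inv (f s) = s"
  using bij by (auto intro: bij_betw_apply[OF bij_betw_the_inv_into] f_the_inv_into_f_bij_betw
      simp: bij_betw_def the_inv_into_f_f)

lemma finite_jsl_A: "finite_jsl (states A) (le A)"
  using jsl_dfa_A by (simp add: jsl_dfa_def)

lemma finite_jsl_B: "finite_jsl (states B) (le B)"
  using bij ord finite_jsl_A by (rule finite_jsl_order_iso)

lemma join_preserving_f: "join_preserving (states B) (le B) (states A) (le A) f"
  using bij ord finite_jsl_A by (rule join_preserving_order_iso)

lemma join_preserving_f_inv: "join_preserving (states A) (le A) (states B) (le B) f_inv"
  using order_iso_the_inv_into[OF bij ord] finite_jsl_B by (blast intro: join_preserving_order_iso)

lemma trans_B_eq: "s \<in> states B \<Longrightarrow> trans B a s = f_inv (trans A a (f s))"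
  by (metis f_inv_f trans_comm trans_closed)

lemma join_preserving_trans_B: "join_preserving (states B) (le B) (states B) (le B) (trans B a)"
proof (rule join_preserving_cong[OF _ finite_jsl_B])
  show "join_preserving (states B) (le B) (states B) (le B) (f_inv \<circ> (trans A a \<circ> f))"
    using jsl_dfa_A join_preserving_f join_preserving_f_inv unfolding jsl_dfa_def
    by (blast intro: join_preserving_comp)
  show "s \<in> states B \<Longrightarrow> (f_inv \<circ> (trans A a \<circ> f)) s = trans B a s" for s
    using trans_B_eq by simp
qed

lemma jsl_dfa_B: "jsl_dfa B"
proof -
  obtain sf where sf: "sf \<in> states A" "fin A = {s \<in> states A. \<not> le A s sf}"
    using jsl_dfa_A unfolding jsl_dfa_def by blast
  have "s \<in> fin B \<longleftrightarrow> \<not> le B s (f_inv sf)" if "s \<in> states B" for s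
  proof -
    have "s \<in> fin B \<longleftrightarrow> \<not> le A (f s) (f (f_inv sf))"
      using fin_iff that sf f_f_inv bij_betw_apply[OF bij] by simp
    then show ?thesis using ord that f_inv_in[OF sf(1)] by simp
  qed
  then have "fin B = {s \<in> states B. \<not> le B s (f_inv sf)}" using fin_subset by blast
  then show ?thesis
    unfolding jsl_dfa_def using finite_jsl_B join_preserving_trans_B init_in sf(1) f_inv_in by blast
qed

lemma jsl_dfa_morphism_f: "jsl_dfa_morphism B A f"
  unfolding jsl_dfa_morphism_def using join_preserving_f trans_comm init_comm fin_iff by blast

lemma jsl_dfa_morphism_f_inv: "jsl_dfa_morphism A B f_inv"
  unfolding jsl_dfa_morphism_def
proof (intro conjI allI ballI)
  fix a t assume t: "t \<in> states A"
  show "f_inv (trans A a t) = trans B a (f_inv t)" using trans_B_eq[OF f_inv_in[OF t]] f_f_inv[OF t] by simp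
next
  fix t assume t: "t \<in> states A"
  show "f_inv t \<in> fin B \<longleftrightarrow> t \<in> fin A" using fin_iff[OF f_inv_in[OF t]] f_f_inv[OF t] by simp
next
  show "f_inv (init A) = init B" using f_inv_f init_in init_comm by metis
qed (rule join_preserving_f_inv)

lemma jsl_dfa_iso: "jsl_dfa_iso B A f"
  unfolding jsl_dfa_iso_def using jsl_dfa_morphism_f jsl_dfa_morphism_f_inv bij by blast

end

section \<open>Left quotients and the automaton LQ\<close>

lemma lquot_Union: "lquot u (\<Union>X) = \<Union>(lquot u ` X)"
  unfolding lquot_def by blast

lemma mem_rev_image: "x \<in> rev ` A \<longleftrightarrow> rev x \<in> A"
  by (metis image_iff rev_rev_ident)

lemma lquot_rev_image: "w \<in> lquot v (rev ` L) \<longleftrightarrow> rev w @ rev v \<in> L"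
  by (simp add: lquot_def mem_rev_image)

lemma regular_finite_lquots:
  assumes "regular L"
  shows "finite {lquot u L | u. True}" and "finite {lquot u (rev ` L) | u. True}"
proof -
  obtain Q :: "nat set" and q0 \<delta> F where A: "finite Q" "q0 \<in> Q" "\<forall>a q. q \<in> Q \<longrightarrow> \<delta> a q \<in> Q"
    "L = {w. foldl (\<lambda>q a. \<delta> a q) q0 w \<in> F}"
    using assms unfolding regular_def by blast
  define run where "run q w = foldl (\<lambda>q a. \<delta> a q) q w" for q w
  have run_in: "q \<in> Q \<Longrightarrow> run q w \<in> Q" for q w
    unfolding run_def using A(3) by (induction w arbitrary: q) auto
  have run_append: "run q (u @ w) = run (run q u) w" for q u w unfolding run_def by simp
  have L: "L = {w. run q0 w \<in> F}" using A(4) unfolding run_def by simp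
  have "lquot u L = {w. run (run q0 u) w \<in> F}" for u
    unfolding L lquot_def by (simp add: run_append)
  then have "{lquot u L | u. True} \<subseteq> (\<lambda>q. {w. run q w \<in> F}) ` Q"
    using run_in A(2) by blast
  then show "finite {lquot u L | u. True}" using A(1) finite_subset by blast
  have "lquot u (rev ` L) = {w. run q0 (rev w) \<in> {q \<in> Q. run q (rev u) \<in> F}}" for u
    using run_in A(2) by (auto simp: lquot_rev_image L run_append)
  then have "{lquot u (rev ` L) | u. True} \<subseteq> (\<lambda>P. {w. run q0 (rev w) \<in> P}) ` Pow Q"
    by blast
  then show "finite {lquot u (rev ` L) | u. True}" using A(1) finite_subset by blast
qed

text \<open>Unions of arbitrary, possibly infinite, families of left quotients of M.\<close>

definition lquot_unions :: "'a list set \<Rightarrow> 'a list set set" where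
  "lquot_unions M = {Y. \<forall>w\<in>Y. \<exists>u. w \<in> lquot u M \<and> lquot u M \<subseteq> Y}"

lemma Union_in_lquot_unions: "X \<subseteq> lquot_unions M \<Longrightarrow> \<Union>X \<in> lquot_unions M"
  unfolding lquot_unions_def by blast

lemma self_in_lquot_unions: "M \<in> lquot_unions M"
  unfolding lquot_unions_def by (intro CollectI ballI exI[of _ "[]"]) (auto simp: lquot_def)

lemma lquot_in_lquot_unions:
  assumes "Y \<in> lquot_unions M" shows "lquot [a] Y \<in> lquot_unions M"
  unfolding lquot_unions_def
proof (intro CollectI ballI)
  fix w assume "w \<in> lquot [a] Y"
  then obtain u where "a # w \<in> lquot u M" "lquot u M \<subseteq> Y"
    using assms unfolding lquot_unions_def lquot_def by auto
  then show "\<exists>u. w \<in> lquot u M \<and> lquot u M \<subseteq> lquot [a] Y"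
    by (intro exI[of _ "u @ [a]"]) (auto simp: lquot_def)
qed

lemma states_LQ:
  assumes "finite {lquot u M | u. True}"
  shows "states (LQ M) = lquot_unions M"
proof (intro equalityI subsetI)
  fix Y assume "Y \<in> states (LQ M)"
  then obtain D where "Y = \<Union>D" "D \<subseteq> {lquot u M | u. True}" unfolding LQ_def by auto
  then show "Y \<in> lquot_unions M" unfolding lquot_unions_def by blast
next
  fix Y assume Y: "Y \<in> lquot_unions M"
  let ?D = "{d \<in> {lquot u M | u. True}. d \<subseteq> Y}"
  have "finite ?D" using assms by (rule finite_subset[rotated]) blast
  moreover have "\<Union>?D = Y" using Y unfolding lquot_unions_def by blast
  ultimately show "Y \<in> states (LQ M)" unfolding LQ_def by (simp only: jdfa.select_convs) blast
qed

lemma finite_lquot_unions: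
  assumes "finite {lquot u M | u. True}"
  shows "finite (lquot_unions M)"
proof -
  have "states (LQ M) \<subseteq> Union ` Pow {lquot u M | u. True}"
    unfolding LQ_def by (simp only: jdfa.select_convs) blast
  moreover have "finite (Union ` Pow {lquot u M | u. True})" using assms by simp
  ultimately have "finite (states (LQ M))" by (rule finite_subset)
  then show ?thesis by (simp only: states_LQ[OF assms])
qed

lemma le_LQ: "le (LQ M) = (\<subseteq>)" and trans_LQ: "trans (LQ M) a = lquot [a]"
  and init_LQ: "init (LQ M) = M" and fin_LQ: "fin (LQ M) = {K \<in> states (LQ M). [] \<in> K}"
  by (simp_all add: LQ_def)

lemma jsl_dfa_LQ:
  assumes fin: "finite {lquot u M | u. True}"
  shows "jsl_dfa (LQ M)"
proof -
  have fin_S: "finite (lquot_unions M)" using fin by (rule finite_lquot_unions)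
  have closed: "\<forall>X \<subseteq> lquot_unions M. \<Union>X \<in> lquot_unions M"
    using Union_in_lquot_unions by blast
  note jsl = finite_jsl_Union_closed[OF fin_S closed]
    and join = join_Union_closed[OF fin_S closed]
  have trans: "join_preserving (lquot_unions M) (\<subseteq>) (lquot_unions M) (\<subseteq>) (lquot [a])" for a
    unfolding join_preserving_def
  proof (intro conjI ballI allI impI)
    fix X assume X: "X \<subseteq> lquot_unions M"
    then have X': "lquot [a] ` X \<subseteq> lquot_unions M" by (auto intro!: lquot_in_lquot_unions)
    show "lquot [a] (join (\<subseteq>) (lquot_unions M) X)
        = join (\<subseteq>) (lquot_unions M) (lquot [a] ` X)"
      unfolding join[OF X] join[OF X'] by (rule lquot_Union)
  qed (rule lquot_in_lquot_unions)
  let ?sf = "\<Union>{Y \<in> lquot_unions M. [] \<notin> Y}"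
  have "?sf \<in> lquot_unions M" by (rule Union_in_lquot_unions) blast
  moreover have "{K \<in> lquot_unions M. [] \<in> K} = {Y \<in> lquot_unions M. \<not> Y \<subseteq> ?sf}" by blast
  ultimately have "\<exists>sf \<in> lquot_unions M. {K \<in> lquot_unions M. [] \<in> K} = {Y \<in> lquot_unions M. \<not> Y \<subseteq> sf}"
    by blast
  then show ?thesis
    unfolding jsl_dfa_def states_LQ[OF fin] le_LQ trans_LQ init_LQ fin_LQ
    using jsl trans self_in_lquot_unions by (intro conjI allI)
qed

section \<open>The reversal duality\<close>

definition left_polar :: "'a list set \<Rightarrow> 'a list set \<Rightarrow> 'a list set" where
  "left_polar L V = {u. \<forall>v\<in>V. u @ v \<notin> L}"

definition right_polar :: "'a list set \<Rightarrow> 'a list set \<Rightarrow> 'a list set" where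
  "right_polar L U = {v. \<forall>u\<in>U. u @ v \<notin> L}"

lemma left_polar_antimono: "A \<subseteq> B \<Longrightarrow> left_polar L B \<subseteq> left_polar L A"
  unfolding left_polar_def by blast

lemma right_polar_antimono: "A \<subseteq> B \<Longrightarrow> right_polar L B \<subseteq> right_polar L A"
  unfolding right_polar_def by blast

lemma dr_eq_Compl_right_polar: "dr L K = - right_polar L (- rev ` K)"
  unfolding dr_def lquot_set_def right_polar_def lquot_def by auto

lemma left_polar_right_polar_Compl_rev_image:
  assumes K: "K \<in> lquot_unions (rev ` L)"
  shows "left_polar L (right_polar L (- rev ` K)) = - rev ` K"
proof (intro equalityI subsetI)
  fix u assume u: "u \<in> left_polar L (right_polar L (- rev ` K))"
  show "u \<in> - rev ` K"
  proof
    assume "u \<in> rev ` K"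
    then obtain v where v: "rev u \<in> lquot v (rev ` L)" "lquot v (rev ` L) \<subseteq> K"
      using K unfolding lquot_unions_def mem_rev_image by blast
    have "rev v \<in> right_polar L (- rev ` K)" unfolding right_polar_def
    proof (intro CollectI ballI notI)
      fix u' assume "u' \<in> - rev ` K" "u' @ rev v \<in> L"
      then have "rev u' \<in> lquot v (rev ` L)" "rev u' \<notin> K"
        by (simp_all add: lquot_rev_image mem_rev_image)
      with v(2) show False by blast
    qed
    moreover have "u @ rev v \<in> L" using v(1) by (simp add: lquot_rev_image)
    ultimately show False using u unfolding left_polar_def by blast
  qed
qed (auto simp: left_polar_def right_polar_def)

lemma dr_in_lquot_unions: "dr L K \<in> lquot_unions L"
  unfolding dr_def lquot_set_def lquot_unions_def by blast

lemma dr_subset_iff: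
  assumes "K \<in> lquot_unions (rev ` L)" "K' \<in> lquot_unions (rev ` L)"
  shows "dr L K \<subseteq> dr L K' \<longleftrightarrow> K' \<subseteq> K"
proof -
  have "dr L K \<subseteq> dr L K' \<longleftrightarrow> right_polar L (- rev ` K') \<subseteq> right_polar L (- rev ` K)"
    unfolding dr_eq_Compl_right_polar by blast
  also have "\<dots> \<longleftrightarrow> - rev ` K \<subseteq> - rev ` K'"
  proof
    assume "right_polar L (- rev ` K') \<subseteq> right_polar L (- rev ` K)"
    then have "left_polar L (right_polar L (- rev ` K))
        \<subseteq> left_polar L (right_polar L (- rev ` K'))" by (rule left_polar_antimono)
    then show "- rev ` K \<subseteq> - rev ` K'"
      unfolding left_polar_right_polar_Compl_rev_image[OF assms(1)]
        left_polar_right_polar_Compl_rev_image[OF assms(2)] .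
  qed (rule right_polar_antimono)
  also have "\<dots> \<longleftrightarrow> K' \<subseteq> K" by (auto simp: mem_rev_image)
  finally show ?thesis .
qed

lemma dr_surj:
  assumes Y: "Y \<in> lquot_unions L"
  obtains K where "K \<in> lquot_unions (rev ` L)" "dr L K = Y"
proof
  let ?K = "rev ` (- left_polar L (- Y))"
  show "?K \<in> lquot_unions (rev ` L)" unfolding lquot_unions_def
  proof (intro CollectI ballI)
    fix w assume "w \<in> ?K"
    then obtain v where "v \<notin> Y" "rev w @ v \<in> L" by (auto simp: mem_rev_image left_polar_def)
    then show "\<exists>u. w \<in> lquot u (rev ` L) \<and> lquot u (rev ` L) \<subseteq> ?K"
      by (intro exI[of _ "rev v"]) (auto simp: lquot_rev_image mem_rev_image left_polar_def)
  qed
  have "- rev ` ?K = left_polar L (- Y)" by (simp add: image_image)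
  then show "dr L ?K = Y"
    using Y unfolding dr_def lquot_set_def left_polar_def lquot_unions_def lquot_def by blast
qed

lemma bij_betw_dr: "bij_betw (dr L) (lquot_unions (rev ` L)) (lquot_unions L)"
  unfolding bij_betw_def
proof
  show "inj_on (dr L) (lquot_unions (rev ` L))"
  proof (rule inj_onI)
    fix K K' assume "K \<in> lquot_unions (rev ` L)" "K' \<in> lquot_unions (rev ` L)" "dr L K = dr L K'"
    then show "K = K'" using dr_subset_iff by blast
  qed
  show "dr L ` lquot_unions (rev ` L) = lquot_unions L"
    using dr_in_lquot_unions dr_surj by (blast intro: image_eqI[symmetric])
qed

lemma lquot_subset_iff_lquot_dr_subset_dr:
  assumes t: "t \<in> lquot_unions (rev ` L)"
  shows "lquot [a] t \<subseteq> K \<longleftrightarrow> lquot [a] (dr L K) \<subseteq> dr L t"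
proof -
  have "lquot [a] t \<subseteq> K \<longleftrightarrow> (\<forall>x. x \<notin> K \<longrightarrow> a # x \<notin> t)"
    unfolding lquot_def by auto
  also have "\<dots> \<longleftrightarrow> (\<forall>u. rev u \<notin> K \<longrightarrow> a # rev u \<notin> t)"
    by (metis rev_rev_ident)
  also have "\<dots> \<longleftrightarrow> (\<forall>u \<in> - rev ` K. u @ [a] \<in> - rev ` t)"
    by (auto simp: mem_rev_image)
  also have "\<dots> \<longleftrightarrow> (\<forall>u \<in> - rev ` K. u @ [a] \<in> left_polar L (right_polar L (- rev ` t)))"
    using left_polar_right_polar_Compl_rev_image[OF t] by simp
  also have "\<dots> \<longleftrightarrow> lquot [a] (dr L K) \<subseteq> dr L t"
    unfolding dr_eq_Compl_right_polar lquot_def left_polar_def right_polar_def by auto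
  finally show ?thesis .
qed

lemma Nil_notin_iff_subset_dr:
  assumes t: "t \<in> lquot_unions (rev ` L)"
  shows "[] \<notin> t \<longleftrightarrow> L \<subseteq> dr L t"
proof -
  have "[] \<notin> t \<longleftrightarrow> [] \<in> left_polar L (right_polar L (- rev ` t))"
    using left_polar_right_polar_Compl_rev_image[OF t] by (simp add: mem_rev_image)
  also have "\<dots> \<longleftrightarrow> L \<subseteq> dr L t"
    unfolding dr_eq_Compl_right_polar left_polar_def right_polar_def by auto
  finally show ?thesis .
qed

lemma Nil_in_dr_iff: "[] \<in> dr L K \<longleftrightarrow> \<not> rev ` L \<subseteq> K"
  unfolding dr_eq_Compl_right_polar right_polar_def by (auto simp: mem_rev_image)

lemma states_dual: "states (dual A) = states A"
  and le_dual: "le (dual A) x y \<longleftrightarrow> le A y x"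
  and fin_dual: "fin (dual A) = {s \<in> states A. \<not> le A (init A) s}"
  and trans_dual: "trans (dual A) a s = (THE t. t \<in> states A \<and> le A (trans A a t) s \<and>
                     (\<forall>t'\<in>states A. le A (trans A a t') s \<longrightarrow> le A t' t))"
  and init_dual: "init (dual A) = (THE s. s \<in> states A \<and> s \<notin> fin A \<and>
                     (\<forall>t\<in>states A. t \<notin> fin A \<longrightarrow> le A t s))"
  by (simp_all add: dual_def)

lemma The_greatest_subset_eq:
  assumes "m \<in> S" "\<And>t. t \<in> S \<Longrightarrow> P t \<longleftrightarrow> t \<subseteq> m"
  shows "(THE t. t \<in> S \<and> P t \<and> (\<forall>t'\<in>S. P t' \<longrightarrow> t' \<subseteq> t)) = m"
  using assms by (intro the_equality) blast+

lemma trans_dual_LQ_rev: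
  assumes fin: "finite {lquot u (rev ` L) | u. True}" and K: "K \<in> lquot_unions (rev ` L)"
  shows "trans (dual (LQ (rev ` L))) a K \<in> lquot_unions (rev ` L)
    \<and> dr L (trans (dual (LQ (rev ` L))) a K) = lquot [a] (dr L K)"
proof -
  obtain m where m: "m \<in> lquot_unions (rev ` L)" "dr L m = lquot [a] (dr L K)"
    using dr_surj[OF lquot_in_lquot_unions[OF dr_in_lquot_unions]] .
  have "trans (dual (LQ (rev ` L))) a K = m"
    unfolding trans_dual states_LQ[OF fin] le_LQ trans_LQ
  proof (rule The_greatest_subset_eq[OF m(1)])
    show "lquot [a] t \<subseteq> K \<longleftrightarrow> t \<subseteq> m" if "t \<in> lquot_unions (rev ` L)" for t
      using lquot_subset_iff_lquot_dr_subset_dr[OF that] dr_subset_iff[OF m(1) that] m(2) by simp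
  qed
  with m show ?thesis by simp
qed

lemma init_dual_LQ_rev:
  assumes fin: "finite {lquot u (rev ` L) | u. True}"
  shows "init (dual (LQ (rev ` L))) \<in> lquot_unions (rev ` L) \<and> dr L (init (dual (LQ (rev ` L)))) = L"
proof -
  obtain m where m: "m \<in> lquot_unions (rev ` L)" "dr L m = L"
    using dr_surj[OF self_in_lquot_unions] .
  have "init (dual (LQ (rev ` L))) = m"
    unfolding init_dual states_LQ[OF fin] le_LQ
  proof (rule The_greatest_subset_eq[OF m(1)])
    show "t \<notin> fin (LQ (rev ` L)) \<longleftrightarrow> t \<subseteq> m" if "t \<in> lquot_unions (rev ` L)" for t
      using Nil_notin_iff_subset_dr[OF that] dr_subset_iff[OF m(1) that] m(2)
      by (simp add: fin_LQ states_LQ[OF fin] that)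
  qed
  with m show ?thesis by simp
qed

lemma fin_dual_LQ_rev:
  assumes fin: "finite {lquot u (rev ` L) | u. True}"
  shows "fin (dual (LQ (rev ` L))) = {K \<in> lquot_unions (rev ` L). [] \<in> dr L K}"
  unfolding fin_dual states_LQ[OF fin] le_LQ init_LQ Nil_in_dr_iff ..

lemma jsl_dfa_order_iso_dr:
  assumes fin_L: "finite {lquot u L | u. True}" and fin_rev: "finite {lquot u (rev ` L) | u. True}"
  shows "jsl_dfa_order_iso (LQ L) (dual (LQ (rev ` L))) (dr L)"
proof (unfold_locales, unfold states_dual states_LQ[OF fin_rev] states_LQ[OF fin_L])
  show "jsl_dfa (LQ L)" using fin_L by (rule jsl_dfa_LQ)
  show "bij_betw (dr L) (lquot_unions (rev ` L)) (lquot_unions L)" by (rule bij_betw_dr)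
  show "\<forall>K\<in>lquot_unions (rev ` L). \<forall>K'\<in>lquot_unions (rev ` L).
      le (dual (LQ (rev ` L))) K K' \<longleftrightarrow> le (LQ L) (dr L K) (dr L K')"
    by (simp add: le_dual le_LQ dr_subset_iff)
  show "fin (dual (LQ (rev ` L))) \<subseteq> lquot_unions (rev ` L)"
    and "K \<in> lquot_unions (rev ` L) \<Longrightarrow> K \<in> fin (dual (LQ (rev ` L))) \<longleftrightarrow> dr L K \<in> fin (LQ L)"
    for K using dr_in_lquot_unions[of L K]
    unfolding fin_dual_LQ_rev[OF fin_rev] fin_LQ states_LQ[OF fin_L] by blast+
  show "trans (dual (LQ (rev ` L))) a K \<in> lquot_unions (rev ` L)"
    and "dr L (trans (dual (LQ (rev ` L))) a K) = trans (LQ L) a (dr L K)"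
    if "K \<in> lquot_unions (rev ` L)" for a K
    using trans_dual_LQ_rev[OF fin_rev that] unfolding trans_LQ by blast+
  show "init (dual (LQ (rev ` L))) \<in> lquot_unions (rev ` L)"
    and "dr L (init (dual (LQ (rev ` L)))) = init (LQ L)"
    using init_dual_LQ_rev[OF fin_rev] unfolding init_LQ by blast+
qed

theorem proposition3p9:
  fixes L :: "('a :: finite) list set"
  assumes "regular L"
  shows "jsl_dfa (dual (LQ (rev ` L))) \<and> jsl_dfa (LQ L) \<and>
         jsl_dfa_iso (dual (LQ (rev ` L))) (LQ L) (dr L)"
proof -
  interpret jsl_dfa_order_iso "LQ L" "dual (LQ (rev ` L))" "dr L"
    using regular_finite_lquots[OF assms] by (rule jsl_dfa_order_iso_dr)
  show ?thesis using jsl_dfa_B jsl_dfa_A jsl_dfa_iso by blast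
qed

end
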